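(* Let $d\ge2$, $f:\mathbb Z^d\to\mathbb R$, and let $\varphi:G\to\mathbb R$ be a bounded $f$-flow on the Cayley graph $G$ of $\mathbb Z^d$. Let $$C=\{n_1,\dots,n_1+k_1\}\times\dots\times\{n_{d-1},\dots,n_{d-1}+k_{d-1}\}\times\{n_d,n_d+1\}$$ for some integers $n_1,\dots,n_d,k_1,\dots,k_{d-1}$ with $k_1,\dots,k_{d-1}\ge0$. Then for every $1\le\ell<d$ there is an $f$-flow $\psi$ such that: (i) $\mathrm{supp}(\varphi-\psi)\subseteq\mathrm{edges}(C)$; (ii) for every $x=(x_1,\dots,x_{d-1},n_d)\in C$ with $n_\ell\le x_\ell<n_\ell+k_\ell$ we have $\psi(x,x+e_d)\in\mathbb Z$; (iii) $|\varphi-\psi|<2$ on every edge.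
   Context: $G=\{(x,x')\in\mathbb Z^d\times\mathbb Z^d: x'-x\in\{\pm e_1,\dots,\pm e_d\}\}$ is the Cayley graph of $\mathbb Z^d$; an edge $(x,x')$ is positively oriented if $x'-x=e_j$ for some $j$. For $A\subseteq\mathbb Z^d$, $\mathrm{edges}(A)=\{(x,x+e_j):1\le j\le d,\ \{x,x+e_j\}\subseteq A\}$. An $f$-flow is $\varphi:G\to\mathbb R$ with $\varphi(x,y)=-\varphi(y,x)$ and $f(x)=\sum_{(x,y)\in G}\varphi(x,y)$ for all $x$. For a flow difference $\eta=\varphi-\psi$ (antisymmetric), "$\mathrm{supp}(\eta)\subseteq \mathcal E$" for a set $\mathcal E$ of positively oriented edges means $\eta(x,y)=0$ unless $(x,y)\in\mathcal E$ or $(y,x)\in\mathcal E$. *)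

theory Defs
  imports Complex_Main
begin

text \<open>Points of Z^d are represented as functions nat => int vanishing at all
coordinates >= d; coordinate i (0-indexed) corresponds to the paper's
coordinate i+1.\<close>

type_synonym pt = "nat \<Rightarrow> int"

definition lattice :: "nat \<Rightarrow> pt set" where
  "lattice d = {x. \<forall>i\<ge>d. x i = 0}"

definition unitv :: "nat \<Rightarrow> pt" where
  "unitv j = (\<lambda>i. if i = j then 1 else 0)"

definition padd :: "pt \<Rightarrow> pt \<Rightarrow> pt" (infixl "\<oplus>" 65) where
  "x \<oplus> y = (\<lambda>i. x i + y i)"

definition psub :: "pt \<Rightarrow> pt \<Rightarrow> pt" (infixl "\<ominus>" 65) where
  "x \<ominus> y = (\<lambda>i. x i - y i)"

definition cayley_edge :: "nat \<Rightarrow> pt \<Rightarrow> pt \<Rightarrow> bool" where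
  "cayley_edge d x y \<longleftrightarrow> x \<in> lattice d \<and>
     (\<exists>j<d. y = x \<oplus> unitv j \<or> y = x \<ominus> unitv j)"

definition is_flow :: "nat \<Rightarrow> (pt \<Rightarrow> real) \<Rightarrow> (pt \<Rightarrow> pt \<Rightarrow> real) \<Rightarrow> bool" where
  "is_flow d f \<phi> \<longleftrightarrow>
     (\<forall>x y. cayley_edge d x y \<longrightarrow> \<phi> x y = - \<phi> y x) \<and>
     (\<forall>x\<in>lattice d. f x = (\<Sum>j<d. \<phi> x (x \<oplus> unitv j) + \<phi> x (x \<ominus> unitv j)))"

definition bounded_flow :: "nat \<Rightarrow> (pt \<Rightarrow> pt \<Rightarrow> real) \<Rightarrow> bool" where
  "bounded_flow d \<phi> \<longleftrightarrow> (\<exists>B. \<forall>x y. cayley_edge d x y \<longrightarrow> \<bar>\<phi> x y\<bar> \<le> B)"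

definition edges :: "nat \<Rightarrow> pt set \<Rightarrow> (pt \<times> pt) set" where
  "edges d A = {(x, x \<oplus> unitv j) | x j. j < d \<and> x \<in> A \<and> x \<oplus> unitv j \<in> A}"

definition supp_sub :: "nat \<Rightarrow> (pt \<Rightarrow> pt \<Rightarrow> real) \<Rightarrow> (pt \<times> pt) set \<Rightarrow> bool" where
  "supp_sub d \<eta> E \<longleftrightarrow>
     (\<forall>x y. cayley_edge d x y \<longrightarrow> \<eta> x y \<noteq> 0 \<longrightarrow> (x, y) \<in> E \<or> (y, x) \<in> E)"

definition box :: "nat \<Rightarrow> pt \<Rightarrow> pt \<Rightarrow> pt set" where
  "box d n k = {x \<in> lattice d. (\<forall>i<d-1. n i \<le> x i \<and> x i \<le> n i + k i) \<and>
                 (x (d-1) = n (d-1) \<or> x (d-1) = n (d-1) + 1)}"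

end

theory Submission
  imports Defs
begin

text \<open>Superpose on \<open>\<phi>\<close> circulations around the unit squares (plaquettes) of the bottom layer
of the box in the plane spanned by \<open>e\<^sub>l\<close> and the vertical direction \<open>e\<^sub>L\<close>, \<open>L = d - 1\<close>. This
keeps the divergence, changes only edges of the box, and adds \<open>c a - c (a - e\<^sub>l)\<close> to the
vertical edge \<open>(a, a + e\<^sub>L)\<close>, where \<open>c a\<close> is the strength of the circulation at the square with
lower corner \<open>a\<close>. With \<open>c a = - frac (S a)\<close>, \<open>S a\<close> the sum of \<open>\<phi>\<close> over the vertical edges of
the row of \<open>a\<close> up to \<open>a\<close>, the new vertical values telescope to \<open>\<lfloor>S a\<rfloor> - \<lfloor>S (a - e\<^sub>l)\<rfloor>\<close>. Every
edge lies on at most two squares, each changing it by a difference of two values of \<open>c\<close> in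
\<open>(-1, 0]\<close>, hence by less than 2.\<close>

lemma padd_unitv_eq_iff [simp]: "a \<oplus> unitv i = a \<oplus> unitv j \<longleftrightarrow> i = j"
  by (metis (full_types) add_left_cancel padd_def unitv_def zero_neq_one)

lemma psub_unitv_neq_padd_unitv [simp]: "a \<ominus> unitv i \<noteq> a \<oplus> unitv j"
proof
  assume "a \<ominus> unitv i = a \<oplus> unitv j"
  hence "(a \<ominus> unitv i) i = (a \<oplus> unitv j) i" by simp
  thus False by (auto simp: padd_def psub_def unitv_def split: if_splits)
qed

lemma padd_unitv_unitv_neq [simp]: "a \<oplus> unitv i \<oplus> unitv j \<noteq> a" "a \<noteq> a \<oplus> unitv i \<oplus> unitv j"
proof -
  show "a \<oplus> unitv i \<oplus> unitv j \<noteq> a"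
  proof
    assume "a \<oplus> unitv i \<oplus> unitv j = a"
    hence "(a \<oplus> unitv i \<oplus> unitv j) i = a i" by simp
    thus False by (auto simp: padd_def unitv_def split: if_splits)
  qed
  then show "a \<noteq> a \<oplus> unitv i \<oplus> unitv j" by metis
qed

lemma psub_padd_unitv_eq_iff [simp]:
  "a \<ominus> unitv j \<oplus> unitv i = a \<longleftrightarrow> i = j" "a = a \<ominus> unitv j \<oplus> unitv i \<longleftrightarrow> i = j"
proof -
  show *: "a \<ominus> unitv j \<oplus> unitv i = a \<longleftrightarrow> i = j"
  proof
    assume "a \<ominus> unitv j \<oplus> unitv i = a"
    hence "(a \<ominus> unitv j \<oplus> unitv i) i = a i" by simp
    thus "i = j" by (auto simp: padd_def psub_def unitv_def split: if_splits)
  qed (auto simp: padd_def psub_def fun_eq_iff)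
  then show "a = a \<ominus> unitv j \<oplus> unitv i \<longleftrightarrow> i = j" by metis
qed

lemma padd_psub_unitv_cancel [simp]: "a \<oplus> unitv i \<ominus> unitv i = a"
  by (auto simp: padd_def psub_def fun_eq_iff)

lemma psub_padd_unitv_cancel [simp]: "a \<ominus> unitv i \<oplus> unitv i = a"
  by (auto simp: padd_def psub_def fun_eq_iff)

lemma psub_unitv_commute: "a \<ominus> unitv i \<ominus> unitv j = a \<ominus> unitv j \<ominus> unitv i"
  by (auto simp: psub_def fun_eq_iff)

lemma padd_unitv_commute: "a \<oplus> unitv i \<oplus> unitv j = a \<oplus> unitv j \<oplus> unitv i"
  by (auto simp: padd_def fun_eq_iff)

lemma padd_unitv_in_lattice: "a \<in> lattice d \<Longrightarrow> j < d \<Longrightarrow> a \<oplus> unitv j \<in> lattice d"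
  by (auto simp: lattice_def padd_def unitv_def)

text \<open>The value on positively oriented edges of the superposition, over all \<open>a\<close>, of the
circulations \<open>c a\<close> around \<open>a \<rightarrow> a + e\<^sub>L \<rightarrow> a + e\<^sub>L + e\<^sub>l \<rightarrow> a + e\<^sub>l \<rightarrow> a\<close>.\<close>
definition plaquette_forward :: "nat \<Rightarrow> nat \<Rightarrow> (pt \<Rightarrow> real) \<Rightarrow> pt \<Rightarrow> pt \<Rightarrow> real" where
  "plaquette_forward L l c a b =
     (if b = a \<oplus> unitv L then c a - c (a \<ominus> unitv l)
      else if b = a \<oplus> unitv l then c (a \<ominus> unitv L) - c a else 0)"

definition plaquette_flow :: "nat \<Rightarrow> nat \<Rightarrow> (pt \<Rightarrow> real) \<Rightarrow> pt \<Rightarrow> pt \<Rightarrow> real" where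
  "plaquette_flow L l c a b = plaquette_forward L l c a b - plaquette_forward L l c b a"

lemma plaquette_flow_antisym: "plaquette_flow L l c a b = - plaquette_flow L l c b a"
  by (simp add: plaquette_flow_def)

lemma plaquette_flow_padd:
  "l \<noteq> L \<Longrightarrow> plaquette_flow L l c a (a \<oplus> unitv j) =
     (if j = L then c a - c (a \<ominus> unitv l) else 0) +
     (if j = l then c (a \<ominus> unitv L) - c a else 0)"
  by (auto simp: plaquette_flow_def plaquette_forward_def)

lemma plaquette_flow_psub:
  "l \<noteq> L \<Longrightarrow> plaquette_flow L l c a (a \<ominus> unitv j) =
     (if j = L then c (a \<ominus> unitv L \<ominus> unitv l) - c (a \<ominus> unitv L) else 0) +
     (if j = l then c (a \<ominus> unitv l) - c (a \<ominus> unitv l \<ominus> unitv L) else 0)"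
  by (auto simp: plaquette_flow_def plaquette_forward_def)

lemma plaquette_flow_divergence:
  assumes "l \<noteq> L" "l < d" "L < d"
  shows "(\<Sum>j<d. plaquette_flow L l c a (a \<oplus> unitv j) + plaquette_flow L l c a (a \<ominus> unitv j)) = 0"
proof -
  have "(\<Sum>j<d. plaquette_flow L l c a (a \<oplus> unitv j) + plaquette_flow L l c a (a \<ominus> unitv j)) =
    (\<Sum>j<d. ((if j = L then c a - c (a \<ominus> unitv l) else 0) +
              (if j = l then c (a \<ominus> unitv L) - c a else 0)) +
             ((if j = L then c (a \<ominus> unitv L \<ominus> unitv l) - c (a \<ominus> unitv L) else 0) +
              (if j = l then c (a \<ominus> unitv l) - c (a \<ominus> unitv l \<ominus> unitv L) else 0)))"
    using assms(1) by (simp add: plaquette_flow_padd plaquette_flow_psub)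
  also have "\<dots> = 0"
    using assms by (simp add: sum.distrib psub_unitv_commute[of a L l])
  finally show ?thesis .
qed

lemma is_flow_add_plaquette_flow:
  assumes "is_flow d f \<phi>" "l \<noteq> L" "l < d" "L < d"
  shows "is_flow d f (\<lambda>x y. \<phi> x y + plaquette_flow L l c x y)"
proof -
  have "(\<Sum>j<d. (\<phi> x (x \<oplus> unitv j) + plaquette_flow L l c x (x \<oplus> unitv j)) +
                 (\<phi> x (x \<ominus> unitv j) + plaquette_flow L l c x (x \<ominus> unitv j))) =
        (\<Sum>j<d. \<phi> x (x \<oplus> unitv j) + \<phi> x (x \<ominus> unitv j)) +
        (\<Sum>j<d. plaquette_flow L l c x (x \<oplus> unitv j) + plaquette_flow L l c x (x \<ominus> unitv j))"
    for x by (simp add: sum.distrib algebra_simps)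
  also have "\<dots> x = (\<Sum>j<d. \<phi> x (x \<oplus> unitv j) + \<phi> x (x \<ominus> unitv j))" for x
    using plaquette_flow_divergence[OF assms(2-4)] by simp
  finally have "(\<Sum>j<d. (\<phi> x (x \<oplus> unitv j) + plaquette_flow L l c x (x \<oplus> unitv j)) +
                 (\<phi> x (x \<ominus> unitv j) + plaquette_flow L l c x (x \<ominus> unitv j))) =
        (\<Sum>j<d. \<phi> x (x \<oplus> unitv j) + \<phi> x (x \<ominus> unitv j))" for x .
  moreover have "\<phi> x y + plaquette_flow L l c x y = - (\<phi> y x + plaquette_flow L l c y x)"
    if "cayley_edge d x y" for x y
    using assms(1) that plaquette_flow_antisym[of L l c x y] by (simp add: is_flow_def)
  ultimately show ?thesis
    using assms(1) by (simp add: is_flow_def)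
qed

lemma plaquette_flow_bound:
  assumes "\<And>x y. \<bar>c x - c y\<bar> < 1"
  shows "\<bar>plaquette_flow L l c a b\<bar> < 2"
proof -
  have "\<bar>plaquette_forward L l c x y\<bar> < 1" for x y
    using assms by (auto simp: plaquette_forward_def)
  from this[of a b] this[of b a] show ?thesis by (simp add: plaquette_flow_def)
qed

lemma plaquette_forward_support:
  assumes "plaquette_forward L l c x y \<noteq> 0" "L < d" "l < d"
    and corner: "\<And>a. c a \<noteq> 0 \<Longrightarrow>
      a \<in> B \<and> a \<oplus> unitv L \<in> B \<and> a \<oplus> unitv l \<in> B \<and> a \<oplus> unitv l \<oplus> unitv L \<in> B"
  shows "(x, y) \<in> edges d B"
proof -
  have edge: "(a, a \<oplus> unitv j) \<in> edges d B" if "j < d" "a \<in> B" "a \<oplus> unitv j \<in> B" for a j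
    using that unfolding edges_def by blast
  show ?thesis
  proof (cases "y = x \<oplus> unitv L")
    case True
    with assms(1) have "c x \<noteq> 0 \<or> c (x \<ominus> unitv l) \<noteq> 0" by (auto simp: plaquette_forward_def)
    then have "x \<in> B \<and> x \<oplus> unitv L \<in> B"
      using corner[of x] corner[of "x \<ominus> unitv l"] by auto
    with True show ?thesis using edge assms(2) by blast
  next
    case False
    with assms(1) have y: "y = x \<oplus> unitv l" and "c x \<noteq> 0 \<or> c (x \<ominus> unitv L) \<noteq> 0"
      by (auto simp: plaquette_forward_def split: if_splits)
    then have "x \<in> B \<and> x \<oplus> unitv l \<in> B"
      using corner[of x] corner[of "x \<ominus> unitv L"] padd_unitv_commute[of "x \<ominus> unitv L" l L] by auto
    with y show ?thesis using edge assms(3) by blast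
  qed
qed

lemma supp_sub_plaquette_flow:
  assumes "L < d" "l < d"
    and "\<And>a. c a \<noteq> 0 \<Longrightarrow>
      a \<in> B \<and> a \<oplus> unitv L \<in> B \<and> a \<oplus> unitv l \<in> B \<and> a \<oplus> unitv l \<oplus> unitv L \<in> B"
  shows "supp_sub d (plaquette_flow L l c) (edges d B)"
  unfolding supp_sub_def
proof (intro allI impI)
  fix x y assume "plaquette_flow L l c x y \<noteq> 0"
  then have "plaquette_forward L l c x y \<noteq> 0 \<or> plaquette_forward L l c y x \<noteq> 0"
    by (auto simp: plaquette_flow_def)
  then show "(x, y) \<in> edges d B \<or> (y, x) \<in> edges d B"
    using plaquette_forward_support[OF _ assms] by blast
qed

definition row_sum :: "nat \<Rightarrow> nat \<Rightarrow> int \<Rightarrow> (pt \<Rightarrow> pt \<Rightarrow> real) \<Rightarrow> pt \<Rightarrow> real" where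
  "row_sum L l m \<phi> a = (\<Sum>s\<in>{m..a l}. \<phi> (a(l := s)) (a(l := s) \<oplus> unitv L))"

lemma row_sum_step:
  assumes "m \<le> a l"
  shows "row_sum L l m \<phi> a = row_sum L l m \<phi> (a \<ominus> unitv l) + \<phi> a (a \<oplus> unitv L)"
proof -
  have "(a \<ominus> unitv l)(l := s) = a(l := s)" for s by (auto simp: psub_def unitv_def)
  moreover have "(a \<ominus> unitv l) l = a l - 1" by (simp add: psub_def unitv_def)
  moreover have "{m..a l} = insert (a l) {m..a l - 1}" using assms by auto
  ultimately show ?thesis by (simp add: row_sum_def add.commute)
qed

lemma row_sum_start: "a l = m \<Longrightarrow> row_sum L l m \<phi> (a \<ominus> unitv l) = 0"
  by (simp add: row_sum_def psub_def unitv_def)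

lemma frac_telescope: "s' = s + v \<Longrightarrow> v - frac s' + frac s \<in> \<int>"
  by (simp add: frac_def)

definition row_rounding :: "nat \<Rightarrow> nat \<Rightarrow> int \<Rightarrow> pt set \<Rightarrow> (pt \<Rightarrow> pt \<Rightarrow> real) \<Rightarrow> pt \<Rightarrow> real"
  where "row_rounding L l m R \<phi> a = (if a \<in> R then - frac (row_sum L l m \<phi> a) else 0)"

lemma row_rounding_range: "-1 < row_rounding L l m R \<phi> a \<and> row_rounding L l m R \<phi> a \<le> 0"
  using frac_lt_1[of "row_sum L l m \<phi> a"] by (auto simp: row_rounding_def)

lemma row_rounding_vertical_integral:
  assumes "l \<noteq> L" "x \<in> R" "m \<le> x l" "x l \<noteq> m \<Longrightarrow> x \<ominus> unitv l \<in> R"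
  shows "\<phi> x (x \<oplus> unitv L) + plaquette_flow L l (row_rounding L l m R \<phi>) x (x \<oplus> unitv L) \<in> \<int>"
proof -
  let ?S = "row_sum L l m \<phi>"
  have "row_rounding L l m R \<phi> (x \<ominus> unitv l) = - frac (?S (x \<ominus> unitv l))"
    using assms(4) row_sum_start[of x l m] by (cases "x l = m") (auto simp: row_rounding_def)
  then have "plaquette_flow L l (row_rounding L l m R \<phi>) x (x \<oplus> unitv L) =
      - frac (?S x) + frac (?S (x \<ominus> unitv l))"
    using assms(1,2) by (simp add: plaquette_flow_padd row_rounding_def)
  moreover have "\<phi> x (x \<oplus> unitv L) - frac (?S x) + frac (?S (x \<ominus> unitv l)) \<in> \<int>"
    using assms(3) by (intro frac_telescope row_sum_step)
  ultimately show ?thesis by (simp only: diff_conv_add_uminus add.assoc)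
qed

definition box_corners :: "nat \<Rightarrow> pt \<Rightarrow> pt \<Rightarrow> nat \<Rightarrow> pt set" where
  "box_corners d n k l = {a \<in> box d n k. a (d - 1) = n (d - 1) \<and> a l < n l + k l}"

lemma box_corners_plaquette_in_box:
  assumes "a \<in> box_corners d n k l" "l < d - 1"
  shows "a \<in> box d n k \<and> a \<oplus> unitv (d - 1) \<in> box d n k \<and> a \<oplus> unitv l \<in> box d n k \<and>
         a \<oplus> unitv l \<oplus> unitv (d - 1) \<in> box d n k"
proof -
  have "a \<in> lattice d" "d - 1 < d" using assms by (auto simp: box_corners_def box_def)
  then have "a \<oplus> unitv l \<in> lattice d" "a \<oplus> unitv (d - 1) \<in> lattice d"
    "a \<oplus> unitv l \<oplus> unitv (d - 1) \<in> lattice d"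
    using assms(2) padd_unitv_in_lattice by auto
  with assms show ?thesis
    by (auto simp: box_corners_def box_def padd_def unitv_def)
qed

lemma box_corners_predecessor:
  assumes "a \<in> box_corners d n k l" "l < d - 1" "a l \<noteq> n l"
  shows "a \<ominus> unitv l \<in> box_corners d n k l"
  using assms by (auto simp: box_corners_def box_def lattice_def psub_def unitv_def)

theorem mainTheorem5:
  fixes d :: nat and f :: "pt \<Rightarrow> real" and \<phi> :: "pt \<Rightarrow> pt \<Rightarrow> real"
    and n k :: pt and l :: nat
  assumes "d \<ge> 2"
    and "is_flow d f \<phi>" and "bounded_flow d \<phi>"
    and "\<forall>i<d-1. k i \<ge> 0"
    and "l < d - 1"
  shows "\<exists>\<psi>. is_flow d f \<psi> \<and>
           supp_sub d (\<lambda>x y. \<phi> x y - \<psi> x y) (edges d (box d n k)) \<and>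
           (\<forall>x\<in>box d n k. x (d-1) = n (d-1) \<and> n l \<le> x l \<and> x l < n l + k l
              \<longrightarrow> \<psi> x (x \<oplus> unitv (d-1)) \<in> \<int>) \<and>
           (\<forall>x y. cayley_edge d x y \<longrightarrow> \<bar>\<phi> x y - \<psi> x y\<bar> < 2)"
proof -
  define L where "L = d - 1"
  have lL: "l \<noteq> L" "l < d" "L < d" using assms(1,5) by (auto simp: L_def)
  define R where "R = box_corners d n k l"
  define \<eta> where "\<eta> = plaquette_flow L l (row_rounding L l (n l) R \<phi>)"
  have bound: "\<bar>\<eta> x y\<bar> < 2" for x y
    unfolding \<eta>_def using row_rounding_range by (intro plaquette_flow_bound) (smt (verit))
  have supp: "supp_sub d \<eta> (edges d (box d n k))"
    unfolding \<eta>_def using lL assms(5) box_corners_plaquette_in_box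
    by (intro supp_sub_plaquette_flow) (auto simp: row_rounding_def R_def L_def split: if_splits)
  have integral: "\<phi> x (x \<oplus> unitv L) + \<eta> x (x \<oplus> unitv L) \<in> \<int>" if "x \<in> R" "n l \<le> x l" for x
    unfolding \<eta>_def using that lL box_corners_predecessor[OF _ assms(5)]
    by (intro row_rounding_vertical_integral) (auto simp: R_def)
  show ?thesis
  proof (intro exI[of _ "\<lambda>x y. \<phi> x y + \<eta> x y"] conjI)
    show "is_flow d f (\<lambda>x y. \<phi> x y + \<eta> x y)"
      unfolding \<eta>_def using is_flow_add_plaquette_flow[OF assms(2) lL] .
    show "supp_sub d (\<lambda>x y. \<phi> x y - (\<phi> x y + \<eta> x y)) (edges d (box d n k))"
      using supp by (simp add: supp_sub_def)
  qed (use bound integral in \<open>auto simp: R_def box_corners_def L_def\<close>)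
qed

end
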